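(* Let $R$ be an irreducible root lattice of type $A_n$, $D_n$ $(n\ge4)$, $E_6$, $E_7$ or $E_8$ with root system $\Phi$, positive roots $\Phi^+$ and Coxeter number $h$, and let $R^*$ be its dual lattice. Let $\gamma+R$ be a coset of $R$ in $R^*$, let $k=\min\{\langle\alpha,\alpha\rangle:\alpha\in\gamma+R\}$, and put \[v=\sum_{\alpha\in\gamma+R,\ \langle\alpha,\alpha\rangle=k} e^{\sqrt2\alpha}\in V_{\sqrt2(\gamma+R)}.\] Then $v$ is a highest weight vector of highest weight $(0,k)$ for $\mathrm{Vir}(s)\otimes\mathrm{Vir}(\tilde\omega)$, that is, $s_jv=\tilde\omega_jv=0$ for all $j\ge2$, $s_1v=0$ and $\tilde\omega_1v=kv$.
   Context: For a positive definite even lattice $N$ whose inner products all lie in $2\mathbb{Z}$ (e.g. $N=\sqrt2R$), $V_N=M(1)\otimes\mathbb{C}[N]$ is the standard lattice vertex operator algebra, where $M(1)=\mathbb{C}[\alpha(n):\alpha\in\mathfrak h,n<0]\cdot 1$ is the Heisenberg Fock space of $\mathfrak h=\mathbb{C}\otimes_{\mathbb{Z}}N$ and $\mathbb{C}[N]$ is the ordinary group algebra with basis $e^{\beta}$, $\beta\in N$ (no cocycle twisting is needed); vertex operators are written $Y(v,z)=\sum_{n\in\mathbb{Z}}v_nz^{-n-1}$. For $\gamma\in R^*$, $V_{\sqrt2(\gamma+R)}=M(1)\otimes\mathrm{span}\{e^{\sqrt2\beta}:\beta\in\gamma+R\}$ is the standard (irreducible) module for $V_{\sqrt2R}$, on which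 the component operators $u_n$ of $u\in V_{\sqrt2R}$ act. The Virasoro element of $V_{\sqrt2R}$ is $\omega=\frac1{2h}\sum_{\alpha\in\Phi^+}\alpha(-1)^2\cdot1$. Define \[s=\frac1{2(h+2)}\sum_{\alpha\in\Phi^+}\big(\alpha(-1)^2\cdot1-2(e^{\sqrt2\alpha}+e^{-\sqrt2\alpha})\big),\qquad \tilde\omega=\omega-s.\] These are mutually orthogonal conformal vectors (i.e. $s_1s=2s$, $\tilde\omega_1\tilde\omega=2\tilde\omega$, $\tilde\omega_1s=0$, and their modes $L(n)=s_{n+1}$, resp. $\tilde\omega_{n+1}$, satisfy Virasoro relations), and $\mathrm{Vir}(s)$, $\mathrm{Vir}(\tilde\omega)$ denote the Virasoro vertex operator algebras they generate. *)

theory Defs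
  imports "HOL-Analysis.Analysis" "HOL-Library.Multiset"
begin

text \<open>Vectors of the ambient Euclidean space R^m are functions nat => real
  supported on the first m coordinates; a Fock space vector is a function from
  monomials (multisets of pairs (i,n), n >= 1, standing for e_i(-n)) to complex
  coefficients; a module vector assigns a Fock vector to each lattice point mu
  (the coefficient of e^mu).\<close>

type_synonym vec = "nat \<Rightarrow> real"
type_synonym fock = "(nat \<times> nat) multiset \<Rightarrow> complex"
type_synonym modl = "vec \<Rightarrow> fock"

definition ip :: "nat \<Rightarrow> vec \<Rightarrow> vec \<Rightarrow> real" where
  "ip m x y = (\<Sum>i<m. x i * y i)"

definition vscale :: "real \<Rightarrow> vec \<Rightarrow> vec" where
  "vscale c x = (\<lambda>i. c * x i)"

definition latA :: "nat \<Rightarrow> vec set" where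
  "latA n = {x. (\<forall>i>n. x i = 0) \<and> (\<forall>i\<le>n. x i \<in> \<int>) \<and> (\<Sum>i\<le>n. x i) = 0}"

definition latD :: "nat \<Rightarrow> vec set" where
  "latD n = {x. (\<forall>i\<ge>n. x i = 0) \<and> (\<forall>i<n. x i \<in> \<int>) \<and> (\<exists>z::int. (\<Sum>i<n. x i) = 2 * of_int z)}"

definition latE8 :: "vec set" where
  "latE8 = latD 8 \<union> {x. (\<forall>i\<ge>8. x i = 0) \<and> (\<forall>i<8. x i - 1/2 \<in> \<int>) \<and> (\<exists>z::int. (\<Sum>i<8. x i) = 2 * of_int z)}"

definition latE7 :: "vec set" where
  "latE7 = {x \<in> latE8. x 6 = x 7}"

definition latE6 :: "vec set" where
  "latE6 = {x \<in> latE8. x 5 = x 6 \<and> x 6 = x 7}"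

datatype rtype = TA nat | TD nat | TE6 | TE7 | TE8

fun adm :: "rtype \<Rightarrow> bool" where
  "adm (TA n) = (n \<ge> 1)"
| "adm (TD n) = (n \<ge> 4)"
| "adm TE6 = True" | "adm TE7 = True" | "adm TE8 = True"

fun amb :: "rtype \<Rightarrow> nat" where
  "amb (TA n) = n + 1" | "amb (TD n) = n" | "amb TE6 = 8" | "amb TE7 = 8" | "amb TE8 = 8"

fun lat :: "rtype \<Rightarrow> vec set" where
  "lat (TA n) = latA n" | "lat (TD n) = latD n" | "lat TE6 = latE6" | "lat TE7 = latE7"
| "lat TE8 = latE8"

fun cox :: "rtype \<Rightarrow> nat" where
  "cox (TA n) = n + 1" | "cox (TD n) = 2 * n - 2" | "cox TE6 = 12" | "cox TE7 = 18"
| "cox TE8 = 30"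

definition in_span :: "vec set \<Rightarrow> vec \<Rightarrow> bool" where
  "in_span R x \<longleftrightarrow> (\<exists>S c. finite S \<and> S \<subseteq> R \<and> x = (\<lambda>i. \<Sum>r\<in>S. c r * r i))"

definition dual :: "nat \<Rightarrow> vec set \<Rightarrow> vec set" where
  "dual m R = {x. in_span R x \<and> (\<forall>r\<in>R. ip m x r \<in> \<int>)}"

definition coset :: "vec \<Rightarrow> vec set \<Rightarrow> vec set" where
  "coset g R = {(\<lambda>i. g i + r i) | r. r \<in> R}"

definition roots :: "nat \<Rightarrow> vec set \<Rightarrow> vec set" where
  "roots m R = {x \<in> R. ip m x x = 2}"

definition posroots :: "rtype \<Rightarrow> vec \<Rightarrow> vec set" where
  "posroots T t = {a \<in> roots (amb T) (lat T). ip (amb T) a t > 0}"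

text \<open>Heisenberg mode alpha(n), n nonzero, on the Fock space, in the orthonormal
  coordinate basis e_i: e_i(-n) multiplies by the variable (i,n),
  e_i(n) = n d/d(i,n) for n > 0.\<close>
definition hbF :: "nat \<Rightarrow> vec \<Rightarrow> int \<Rightarrow> fock \<Rightarrow> fock" where
  "hbF m a n g = (\<lambda>M.
     if n < 0 then (\<Sum>i<m. complex_of_real (a i) *
          (if (i, nat (-n)) \<in># M then g (M - {#(i, nat (-n))#}) else 0))
     else if n > 0 then of_int n * (\<Sum>i<m. complex_of_real (a i) *
          of_nat (count M (i, nat n) + 1) * g (M + {#(i, nat n)#}))
     else 0)"

text \<open>coefficient of z^a in exp(sum_{n>0} beta(-n) z^n / n)\<close>
fun Sop :: "nat \<Rightarrow> vec \<Rightarrow> nat \<Rightarrow> fock \<Rightarrow> fock" where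
  "Sop m b 0 g = g"
| "Sop m b (Suc a) g = (\<lambda>M. (1 / of_nat (Suc a)) *
      (\<Sum>n\<in>{1..Suc a}. hbF m b (- int n) (Sop m b (Suc a - n) g) M))"

text \<open>coefficient of z^(-a) in exp(- sum_{n>0} beta(n) z^(-n) / n)\<close>
fun Top :: "nat \<Rightarrow> vec \<Rightarrow> nat \<Rightarrow> fock \<Rightarrow> fock" where
  "Top m b 0 g = g"
| "Top m b (Suc a) g = (\<lambda>M. (- 1 / of_nat (Suc a)) *
      (\<Sum>n\<in>{1..Suc a}. hbF m b (int n) (Top m b (Suc a - n) g) M))"

definition hbM :: "nat \<Rightarrow> vec \<Rightarrow> int \<Rightarrow> modl \<Rightarrow> modl" where
  "hbM m a n f = (\<lambda>mu. if n = 0 then (\<lambda>M. complex_of_real (ip m a mu) * f mu M)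
                       else hbF m a n (f mu))"

definition nop :: "nat \<Rightarrow> vec \<Rightarrow> int \<Rightarrow> int \<Rightarrow> modl \<Rightarrow> modl" where
  "nop m a p q f = (if p \<le> q then hbM m a p (hbM m a q f) else hbM m a q (hbM m a p f))"

text \<open>component (alpha(-1)^2 1)_j of Y(alpha(-1)^2 1, z) = :alpha(z)^2:
  = sum_j (sum_p :alpha(p) alpha(j-1-p):) z^(-j-1)\<close>
definition hsq :: "nat \<Rightarrow> vec \<Rightarrow> int \<Rightarrow> modl \<Rightarrow> modl" where
  "hsq m a j f = (\<lambda>mu M. infsum (\<lambda>p::int. nop m a p (j - 1 - p) f mu M) UNIV)"

text \<open>component (e^beta)_j of Y(e^beta,z) = E^-(-beta,z) E^+(-beta,z) e^beta z^(beta(0))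
  (no cocycle); on u (x) e^lam it gives
  sum_{a - b = -j-1-<beta,lam>} S_a T_b u (x) e^(beta+lam).\<close>
definition emode :: "nat \<Rightarrow> vec \<Rightarrow> int \<Rightarrow> modl \<Rightarrow> modl" where
  "emode m b j f = (\<lambda>mu M.
     (let lam = (\<lambda>i. mu i - b i); p = ip m b lam in
      if p \<in> \<int> then
        infsum (\<lambda>c::nat. Sop m b (nat (- j - 1 - \<lfloor>p\<rfloor> + int c)) (Top m b c (f lam)) M)
               {c::nat. - j - 1 - \<lfloor>p\<rfloor> + int c \<ge> 0}
      else 0))"

definition smode :: "rtype \<Rightarrow> vec \<Rightarrow> int \<Rightarrow> modl \<Rightarrow> modl" where
  "smode T t j f = (\<lambda>mu M. (1 / (2 * (of_nat (cox T) + 2))) *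
     (\<Sum>a\<in>posroots T t. hsq (amb T) a j f mu M
        - 2 * (emode (amb T) (vscale (sqrt 2) a) j f mu M
               + emode (amb T) (vscale (- sqrt 2) a) j f mu M)))"

definition omode :: "rtype \<Rightarrow> vec \<Rightarrow> int \<Rightarrow> modl \<Rightarrow> modl" where
  "omode T t j f = (\<lambda>mu M. (1 / (2 * of_nat (cox T))) *
     (\<Sum>a\<in>posroots T t. hsq (amb T) a j f mu M))"

definition wtmode :: "rtype \<Rightarrow> vec \<Rightarrow> int \<Rightarrow> modl \<Rightarrow> modl" where
  "wtmode T t j f = (\<lambda>mu M. omode T t j f mu M - smode T t j f mu M)"

definition vac :: fock where
  "vac = (\<lambda>M. if M = {#} then 1 else 0)"

definition vvec :: "rtype \<Rightarrow> vec \<Rightarrow> real \<Rightarrow> modl" where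
  "vvec T g k = (\<lambda>mu. if mu \<in> {vscale (sqrt 2) a | a. a \<in> coset g (lat T) \<and> ip (amb T) a a = k}
                      then vac else (\<lambda>M. 0))"

end

theory Submission
  imports Defs
begin

text \<open>Every coefficient of \<open>v\<close> is the vacuum, so the positive Heisenberg modes kill \<open>v\<close>:
  of \<open>Y(\<alpha>(-1)\<^sup>2, z)\<close> only the zero-mode part acts, and of \<open>Y(e\<^sup>\<beta>, z)\<close> only \<open>E\<^sup>-(-\<beta>, z)\<close>.
  For a root \<open>\<alpha>\<close> and a minimal vector \<open>c\<close> of \<open>\<gamma> + R\<close>, minimality forces
  \<open>\<langle>\<alpha>, c\<rangle> \<in> {-1, 0, 1}\<close>. Hence all modes \<open>j \<ge> 2\<close> vanish on \<open>v\<close>, and at \<open>j = 1\<close> the two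
  lattice terms of \<open>s\<close> at \<open>\<alpha>\<close> cancel its Heisenberg term, so \<open>s\<^sub>1 v = 0\<close>. What is left is
  \<open>\<omega>\<^sub>1 v = (1/2h) \<Sum>\<^sub>\<alpha> 2\<langle>\<alpha>, c\<rangle>\<^sup>2 e\<^sup>\<surd>\<^sup>2\<^sup>c\<close>, which is \<open>k v\<close> by the identity
  \<open>\<Sum>\<^sub>\<alpha>\<^sub>\<in>\<^sub>\<Phi> \<langle>\<alpha>, y\<rangle>\<^sup>2 = 2h\<langle>y, y\<rangle>\<close> on the span of \<open>R\<close>; the latter is checked type by type from
  explicit lists of roots.\<close>

lemma ip_commute: "ip m x y = ip m y x"
  by (simp add: ip_def mult.commute)

lemma ip_add_left: "ip m (\<lambda>i. x i + y i) z = ip m x z + ip m y z"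
  by (simp add: ip_def distrib_right sum.distrib)

lemma ip_add_right: "ip m z (\<lambda>i. x i + y i) = ip m z x + ip m z y"
  by (simp add: ip_def distrib_left sum.distrib)

lemma ip_diff_left: "ip m (\<lambda>i. x i - y i) z = ip m x z - ip m y z"
  by (simp add: ip_def left_diff_distrib sum_subtractf)

lemma ip_diff_right: "ip m z (\<lambda>i. x i - y i) = ip m z x - ip m z y"
  by (simp add: ip_def right_diff_distrib sum_subtractf)

lemma ip_uminus_left: "ip m (\<lambda>i. - x i) y = - ip m x y"
  by (simp add: ip_def sum_negf)

lemma ip_uminus_right: "ip m y (\<lambda>i. - x i) = - ip m y x"
  by (simp add: ip_def sum_negf)

lemma ip_vscale_left: "ip m (vscale c x) y = c * ip m x y"
  by (simp add: ip_def vscale_def sum_distrib_left mult.assoc)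

lemma ip_vscale_right: "ip m x (vscale c y) = c * ip m x y"
  by (simp add: ip_def vscale_def sum_distrib_left mult.left_commute)

lemma ip_add_self: "ip m (\<lambda>i. x i + y i) (\<lambda>i. x i + y i) = ip m x x + 2 * ip m x y + ip m y y"
  by (simp add: ip_add_left ip_add_right ip_commute[of m y x])

lemma ip_diff_self: "ip m (\<lambda>i. x i - y i) (\<lambda>i. x i - y i) = ip m x x - 2 * ip m x y + ip m y y"
  by (simp add: ip_diff_left ip_diff_right ip_commute[of m y x])

lemma vscale_sqrt2_eq_iff [simp]: "vscale (sqrt 2) a = vscale (sqrt 2) b \<longleftrightarrow> a = b"
  by (auto simp: vscale_def fun_eq_iff)

lemma vscale_minus_sqrt2: "vscale (- sqrt 2) a = vscale (sqrt 2) (\<lambda>i. - a i)"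
  by (simp add: vscale_def fun_eq_iff)

lemma Ints_small_cases: "(x::real) \<in> \<int> \<Longrightarrow> x = 0 \<or> x = 1 \<or> x = -1 \<or> 2 \<le> \<bar>x\<bar>"
proof -
  assume "x \<in> \<int>"
  then obtain n where "x = of_int n" by (elim Ints_cases)
  moreover have "n = 0 \<or> n = 1 \<or> n = -1 \<or> 2 \<le> \<bar>n\<bar>" by auto
  ultimately show ?thesis by auto
qed

section \<open>Vertex operators on vectors with vacuum coefficients\<close>

definition vac_valued :: "modl \<Rightarrow> bool" where
  "vac_valued f \<longleftrightarrow> (\<forall>mu. f mu = vac \<or> f mu = (\<lambda>M. 0))"

lemma hbF_zero [simp]: "hbF m a n (\<lambda>M. 0) = (\<lambda>M. 0)"
  by (auto simp: hbF_def fun_eq_iff)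

lemma hbF_vac_pos: "0 < n \<Longrightarrow> hbF m a n vac = (\<lambda>M. 0)"
  by (auto simp: hbF_def fun_eq_iff vac_def)

lemma Top_annihilated:
  assumes annih: "\<And>n. 0 < n \<Longrightarrow> hbF m b n u = (\<lambda>M. 0)" and "0 < c"
  shows "Top m b c u = (\<lambda>M. 0)"
  using \<open>0 < c\<close>
proof (induction c rule: less_induct)
  case (less c)
  then obtain a where c: "c = Suc a" by (cases c) auto
  have "hbF m b (int n) (Top m b (Suc a - n) u) = (\<lambda>M. 0)" if "n \<in> {1..Suc a}" for n
  proof (cases "n = Suc a")
    case True
    then show ?thesis using annih by simp
  next
    case False
    then show ?thesis using that less.IH c by simp
  qed
  then show ?case unfolding c by (simp add: fun_eq_iff)
qed

lemma Sop_zero [simp]: "Sop m b c (\<lambda>M. 0) = (\<lambda>M. 0)"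
proof (induction c rule: less_induct)
  case (less c)
  show ?case
  proof (cases c)
    case (Suc a)
    have "hbF m b (- int n) (Sop m b (Suc a - n) (\<lambda>M. 0)) = (\<lambda>M. 0)" if "n \<in> {1..Suc a}" for n
      using that less.IH Suc by simp
    then show ?thesis unfolding Suc by (simp add: fun_eq_iff)
  qed simp
qed

lemma hbM_zero [simp]: "hbM m a n (\<lambda>mu M. 0) = (\<lambda>mu M. 0)"
  by (auto simp: hbM_def fun_eq_iff)

lemma hbM_vac_valued_pos:
  assumes "vac_valued f" and "0 < n"
  shows "hbM m a n f = (\<lambda>mu M. 0)"
proof (intro ext)
  fix mu M
  have "f mu = vac \<or> f mu = (\<lambda>M. 0)" using assms(1) by (simp add: vac_valued_def)
  then show "hbM m a n f mu M = 0" using assms(2) hbF_vac_pos by (auto simp: hbM_def)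
qed

lemma nop_vac_valued_pos: "vac_valued f \<Longrightarrow> 0 < max p q \<Longrightarrow> nop m a p q f = (\<lambda>mu M. 0)"
  unfolding nop_def by (auto simp: hbM_vac_valued_pos)

lemma hsq_vac_valued_ge2: "vac_valued f \<Longrightarrow> 2 \<le> j \<Longrightarrow> hsq m a j f mu M = 0"
  unfolding hsq_def by (rule infsum_0) (simp add: nop_vac_valued_pos)

lemma hsq_vac_valued_1:
  assumes "vac_valued f"
  shows "hsq m a 1 f mu M = complex_of_real (ip m a mu) ^ 2 * f mu M"
proof -
  have "hsq m a 1 f mu M = infsum (\<lambda>p::int. nop m a p (- p) f mu M) {0}"
    unfolding hsq_def by (rule infsum_cong_neutral) (auto simp: nop_vac_valued_pos assms)
  then show ?thesis by (simp add: nop_def hbM_def power2_eq_square)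
qed

text \<open>On a vector with vacuum coefficients, \<open>E\<^sup>+\<close> acts trivially, so only the term
  \<open>c = 0\<close> of the sum defining \<^const>\<open>emode\<close> survives.\<close>
lemma emode_vac_valued:
  fixes mu b :: vec
  assumes "vac_valued f"
  defines "lam \<equiv> \<lambda>i. mu i - b i"
  shows "emode m b j f mu M =
    (if ip m b lam \<in> \<int> \<and> 0 \<le> - j - 1 - \<lfloor>ip m b lam\<rfloor>
     then Sop m b (nat (- j - 1 - \<lfloor>ip m b lam\<rfloor>)) (f lam) M else 0)"
proof (cases "ip m b lam \<in> \<int>")
  case True
  define d where "d = - j - 1 - \<lfloor>ip m b lam\<rfloor>"
  have "f lam = vac \<or> f lam = (\<lambda>M. 0)" using assms(1) by (simp add: vac_valued_def)
  then have Top_pos: "Top m b c (f lam) = (\<lambda>M. 0)" if "0 < c" for c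
    using that Top_annihilated[of m b "f lam" c] hbF_vac_pos by auto
  have "infsum (\<lambda>c::nat. Sop m b (nat (d + int c)) (Top m b c (f lam)) M) {c. 0 \<le> d + int c}
      = infsum (\<lambda>c::nat. Sop m b (nat (d + int c)) (Top m b c (f lam)) M)
          (if 0 \<le> d then {0} else {})"
  proof (rule infsum_cong_neutral)
    fix c :: nat
    assume "c \<in> {c. 0 \<le> d + int c} - (if 0 \<le> d then {0} else {})"
    then have "0 < c" by (cases "c = 0") auto
    then show "Sop m b (nat (d + int c)) (Top m b c (f lam)) M = 0" by (simp add: Top_pos)
  qed auto
  then show ?thesis using True by (simp add: emode_def lam_def[symmetric] d_def Let_def)
qed (simp add: emode_def lam_def[symmetric] Let_def)

section \<open>Minimal vectors of a coset of an integral lattice\<close>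

locale min_norm_coset =
  fixes m :: nat and R :: "vec set" and g :: vec and k :: real
  assumes lattice_add: "r \<in> R \<Longrightarrow> r' \<in> R \<Longrightarrow> (\<lambda>i. r i + r' i) \<in> R"
    and lattice_uminus: "r \<in> R \<Longrightarrow> (\<lambda>i. - r i) \<in> R"
    and lattice_ip_Ints: "r \<in> R \<Longrightarrow> r' \<in> R \<Longrightarrow> ip m r r' \<in> \<int>"
    and ip_g_Ints: "r \<in> R \<Longrightarrow> ip m g r \<in> \<int>"
    and norm_ge_min: "a \<in> coset g R \<Longrightarrow> k \<le> ip m a a"
begin

definition minvecs :: "vec set" where
  "minvecs = {a \<in> coset g R. ip m a a = k}"

definition minvec_sum :: modl where
  "minvec_sum = (\<lambda>mu. if \<exists>a\<in>minvecs. mu = vscale (sqrt 2) a then vac else (\<lambda>M. 0))"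

lemma vac_valued_minvec_sum: "vac_valued minvec_sum"
  by (simp add: vac_valued_def minvec_sum_def)

lemma minvec_sum_vscale: "a \<in> minvecs \<Longrightarrow> minvec_sum (vscale (sqrt 2) a) = vac"
  by (auto simp: minvec_sum_def)

lemma coset_add_lattice: "x \<in> coset g R \<Longrightarrow> a \<in> R \<Longrightarrow> (\<lambda>i. x i + a i) \<in> coset g R"
  unfolding coset_def using lattice_add by (fastforce simp: add.assoc)

lemma coset_diff_lattice: "x \<in> coset g R \<Longrightarrow> a \<in> R \<Longrightarrow> (\<lambda>i. x i - a i) \<in> coset g R"
  using coset_add_lattice[of x "\<lambda>i. - a i"] lattice_uminus by simp

lemma ip_coset_Ints: "x \<in> coset g R \<Longrightarrow> a \<in> R \<Longrightarrow> ip m a x \<in> \<int>"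
  unfolding coset_def
  using ip_g_Ints lattice_ip_Ints by (auto simp: ip_add_right ip_commute[of m a g])

lemma roots_uminus: "a \<in> roots m R \<Longrightarrow> (\<lambda>i. - a i) \<in> roots m R"
  by (simp add: roots_def lattice_uminus ip_uminus_left ip_uminus_right)

text \<open>Minimality of \<open>x\<close> against \<open>x \<plusminus> a\<close> gives \<open>\<bar>\<langle>a, x\<rangle>\<bar> \<le> 1\<close>.\<close>
lemma ip_root_minvec: "a \<in> roots m R \<Longrightarrow> x \<in> minvecs \<Longrightarrow> ip m a x \<in> {-1, 0, 1}"
proof -
  assume a: "a \<in> roots m R" and x: "x \<in> minvecs"
  have aR: "a \<in> R" and aa: "ip m a a = 2" using a by (auto simp: roots_def)
  have xc: "x \<in> coset g R" and xx: "ip m x x = k" using x by (auto simp: minvecs_def)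
  have "k \<le> ip m (\<lambda>i. x i + a i) (\<lambda>i. x i + a i)"
    using norm_ge_min coset_add_lattice[OF xc aR] by blast
  moreover have "k \<le> ip m (\<lambda>i. x i - a i) (\<lambda>i. x i - a i)"
    using norm_ge_min coset_diff_lattice[OF xc aR] by blast
  ultimately have "\<bar>ip m a x\<bar> \<le> 1"
    by (simp add: ip_add_self ip_diff_self xx aa ip_commute[of m x a])
  then show ?thesis using Ints_small_cases[OF ip_coset_Ints[OF xc aR]] by auto
qed

lemma minvec_add_root:
  assumes "a \<in> roots m R" and "b \<in> minvecs" and "ip m a b = -1"
  shows "(\<lambda>i. b i + a i) \<in> minvecs" and "ip m a (\<lambda>i. b i + a i) = 1"
proof -
  have "a \<in> R" "ip m a a = 2" using assms(1) by (auto simp: roots_def)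
  then show "(\<lambda>i. b i + a i) \<in> minvecs" "ip m a (\<lambda>i. b i + a i) = 1"
    using assms(2,3) coset_add_lattice
    by (auto simp: minvecs_def ip_add_self ip_add_right ip_commute[of m b a])
qed

lemma emode_root_ge2:
  assumes a: "a \<in> roots m R" and "2 \<le> j"
  shows "emode m (vscale (sqrt 2) a) j minvec_sum mu M = 0"
proof -
  define lam where "lam = (\<lambda>i. mu i - vscale (sqrt 2) a i)"
  show ?thesis
  proof (cases "\<exists>b\<in>minvecs. lam = vscale (sqrt 2) b")
    case False
    then have "minvec_sum lam = (\<lambda>M. 0)" by (simp add: minvec_sum_def)
    then show ?thesis by (simp add: emode_vac_valued[OF vac_valued_minvec_sum] lam_def[symmetric])
  next
    case True
    then obtain b where b: "b \<in> minvecs" "lam = vscale (sqrt 2) b" by blast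
    have "ip m (vscale (sqrt 2) a) lam = 2 * ip m a b"
      using b by (simp add: ip_vscale_left ip_vscale_right)
    then have "ip m (vscale (sqrt 2) a) lam \<in> {-2, 0, 2}" using ip_root_minvec[OF a b(1)] by auto
    then show ?thesis
      using \<open>2 \<le> j\<close> by (auto simp: emode_vac_valued[OF vac_valued_minvec_sum] lam_def[symmetric])
  qed
qed

text \<open>\<open>(e\<^sup>\<beta>)\<^sub>1 e\<^sup>\<lambda>\<close> is nonzero only when \<open>\<langle>\<beta>, \<lambda>\<rangle> = -2\<close>, and then it is \<open>e\<^sup>\<beta>\<^sup>+\<^sup>\<lambda>\<close>.\<close>
lemma emode_root_1:
  assumes a: "a \<in> roots m R"
  shows "emode m (vscale (sqrt 2) a) 1 minvec_sum mu M =
    (if \<exists>c\<in>minvecs. mu = vscale (sqrt 2) c \<and> ip m a c = 1 then vac M else 0)"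
proof -
  define lam where "lam = (\<lambda>i. mu i - vscale (sqrt 2) a i)"
  have a': "(\<lambda>i. - a i) \<in> roots m R" using roots_uminus[OF a] .
  show ?thesis
  proof (cases "\<exists>b\<in>minvecs. lam = vscale (sqrt 2) b")
    case False
    have no_c: "\<not> (\<exists>c\<in>minvecs. mu = vscale (sqrt 2) c \<and> ip m a c = 1)"
    proof
      assume "\<exists>c\<in>minvecs. mu = vscale (sqrt 2) c \<and> ip m a c = 1"
      then obtain c where c: "c \<in> minvecs" "mu = vscale (sqrt 2) c" "ip m a c = 1" by blast
      have "(\<lambda>i. c i + - a i) \<in> minvecs"
        using minvec_add_root(1)[OF a' c(1)] c(3) by (simp add: ip_uminus_left)
      moreover have "lam = vscale (sqrt 2) (\<lambda>i. c i + - a i)"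
        using c(2) by (simp add: lam_def vscale_def algebra_simps)
      ultimately show False using False by blast
    qed
    have "minvec_sum lam = (\<lambda>M. 0)" using False by (simp add: minvec_sum_def)
    then show ?thesis unfolding if_not_P[OF no_c]
      by (simp add: emode_vac_valued[OF vac_valued_minvec_sum] lam_def[symmetric])
  next
    case True
    then obtain b where b: "b \<in> minvecs" "lam = vscale (sqrt 2) b" by blast
    have mu: "mu = vscale (sqrt 2) (\<lambda>i. b i + a i)"
      using b(2) by (auto simp: lam_def vscale_def fun_eq_iff algebra_simps dest: fun_cong)
    have "ip m (vscale (sqrt 2) a) lam = 2 * ip m a b"
      using b by (simp add: ip_vscale_left ip_vscale_right)
    moreover have "(\<exists>c\<in>minvecs. mu = vscale (sqrt 2) c \<and> ip m a c = 1) \<longleftrightarrow> ip m a b = -1"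
      using mu b(1) a minvec_add_root[OF a b(1)] by (auto simp: ip_add_right roots_def)
    moreover have "ip m a b \<in> {-1, 0, 1}" using ip_root_minvec[OF a b(1)] .
    ultimately show ?thesis
      using b by (auto simp: emode_vac_valued[OF vac_valued_minvec_sum] lam_def[symmetric]
          minvec_sum_vscale)
  qed
qed

text \<open>The quadratic term of \<open>s\<close> at a root is cancelled by its two lattice terms:
  both equal \<open>2\<langle>\<alpha>, c\<rangle>\<^sup>2 e\<^sup>\<surd>\<^sup>2\<^sup>c\<close>, as \<open>\<langle>\<alpha>, c\<rangle> \<in> {-1, 0, 1}\<close>.\<close>
lemma root_term_vanishes:
  assumes a: "a \<in> roots m R" and "1 \<le> j"
  shows "hsq m a j minvec_sum mu M
    - 2 * (emode m (vscale (sqrt 2) a) j minvec_sum mu M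
           + emode m (vscale (- sqrt 2) a) j minvec_sum mu M) = 0"
proof (cases "j = 1")
  case False
  then show ?thesis using \<open>1 \<le> j\<close> roots_uminus[OF a]
    by (simp add: hsq_vac_valued_ge2[OF vac_valued_minvec_sum] emode_root_ge2[OF a]
        vscale_minus_sqrt2 emode_root_ge2)
next
  case True
  have a': "(\<lambda>i. - a i) \<in> roots m R" using roots_uminus[OF a] .
  show ?thesis
  proof (cases "\<exists>c\<in>minvecs. mu = vscale (sqrt 2) c")
    case False
    then have "minvec_sum mu = (\<lambda>M. 0)" by (simp add: minvec_sum_def)
    then show ?thesis unfolding \<open>j = 1\<close> vscale_minus_sqrt2 using False
      by (simp add: hsq_vac_valued_1[OF vac_valued_minvec_sum] emode_root_1[OF a]
          emode_root_1[OF a'])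
  next
    case True
    then obtain c where c: "c \<in> minvecs" "mu = vscale (sqrt 2) c" by blast
    have "ip m a mu = sqrt 2 * ip m a c" using c(2) by (simp add: ip_vscale_right)
    then have "hsq m a 1 minvec_sum mu M = 2 * (ip m a c)^2 * vac M"
      using c by (simp add: hsq_vac_valued_1[OF vac_valued_minvec_sum] minvec_sum_vscale
          power_mult_distrib flip: of_real_power)
    moreover have "ip m a c \<in> {-1, 0, 1}" using ip_root_minvec[OF a c(1)] .
    ultimately show ?thesis unfolding \<open>j = 1\<close> vscale_minus_sqrt2
      using c by (auto simp: emode_root_1[OF a] emode_root_1[OF a'] ip_uminus_left)
  qed
qed

lemma sum_hsq_1:
  assumes "\<And>c. c \<in> minvecs \<Longrightarrow> (\<Sum>a\<in>P. (ip m a c)^2) = h * k"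
  shows "(\<Sum>a\<in>P. hsq m a 1 minvec_sum mu M) = complex_of_real (2 * h * k) * minvec_sum mu M"
proof (cases "\<exists>c\<in>minvecs. mu = vscale (sqrt 2) c")
  case False
  then have "minvec_sum mu = (\<lambda>M. 0)" by (simp add: minvec_sum_def)
  then show ?thesis by (simp add: hsq_vac_valued_1[OF vac_valued_minvec_sum])
next
  case True
  then obtain c where c: "c \<in> minvecs" "mu = vscale (sqrt 2) c" by blast
  have "(\<Sum>a\<in>P. hsq m a 1 minvec_sum mu M) = (\<Sum>a\<in>P. complex_of_real (2 * (ip m a c)^2) * vac M)"
    using c by (simp add: hsq_vac_valued_1[OF vac_valued_minvec_sum] minvec_sum_vscale
        ip_vscale_right power_mult_distrib flip: of_real_power)
  also have "\<dots> = complex_of_real (2 * (\<Sum>a\<in>P. (ip m a c)^2)) * vac M"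
    by (simp add: sum_distrib_right sum_distrib_left)
  finally show ?thesis using assms c by (simp add: minvec_sum_vscale)
qed

end

section \<open>The root lattices\<close>

lemma even_sum_add:
  "\<exists>z::int. (\<Sum>i<n. x i) = 2 * of_int z \<Longrightarrow> \<exists>z::int. (\<Sum>i<n. y i) = 2 * of_int z \<Longrightarrow>
   \<exists>z::int. (\<Sum>i<n. x i + y i) = 2 * of_int z"
  by (auto simp: sum.distrib intro: exI[of _ "_ + _"])

lemma even_sum_uminus:
  "\<exists>z::int. (\<Sum>i<n. x i) = 2 * of_int z \<Longrightarrow> \<exists>z::int. (\<Sum>i<n. - x i) = 2 * of_int z"
  by (metis mult_minus_right of_int_minus sum_negf)

lemma half_Ints_small_cases: "(x::real) - 1/2 \<in> \<int> \<Longrightarrow> x = 1/2 \<or> x = -1/2 \<or> 3/2 \<le> \<bar>x\<bar>"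
proof -
  assume "x - 1/2 \<in> \<int>"
  then obtain n where "x = of_int n + 1/2" by (metis Ints_cases diff_add_cancel)
  then show ?thesis by (cases "n = 0 \<or> n = -1") (auto simp: abs_if)
qed

lemma half_sq: "(x::real) = 1/2 \<or> x = -1/2 \<Longrightarrow> x * x = 1/4"
  by (erule disjE; hypsubst; simp)

lemma half_Ints_add: "(x::real) \<in> \<int> \<Longrightarrow> y - 1/2 \<in> \<int> \<Longrightarrow> x + y - 1/2 \<in> \<int>"
  by (metis Ints_add group_cancel.sub1)

lemma half_Ints_add_half: "(x::real) - 1/2 \<in> \<int> \<Longrightarrow> y - 1/2 \<in> \<int> \<Longrightarrow> x + y \<in> \<int>"
proof -
  assume "x - 1/2 \<in> \<int>" "y - 1/2 \<in> \<int>"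
  then have "(x - 1/2) + (y - 1/2) + 1 \<in> \<int>" by (intro Ints_add Ints_1)
  then show ?thesis by simp
qed

lemma half_Ints_uminus: "(x::real) - 1/2 \<in> \<int> \<Longrightarrow> - x - 1/2 \<in> \<int>"
proof -
  assume "x - 1/2 \<in> \<int>"
  then have "- (x - 1/2) - 1 \<in> \<int>" by (rule Ints_diff[OF Ints_minus Ints_1])
  then show ?thesis by (simp add: algebra_simps)
qed

lemma latA_add: "x \<in> latA n \<Longrightarrow> y \<in> latA n \<Longrightarrow> (\<lambda>i. x i + y i) \<in> latA n"
  by (auto simp: latA_def sum.distrib)

lemma latA_uminus: "x \<in> latA n \<Longrightarrow> (\<lambda>i. - x i) \<in> latA n"
  by (auto simp: latA_def sum_negf)

lemma latA_ip_Ints: "x \<in> latA n \<Longrightarrow> y \<in> latA n \<Longrightarrow> ip (Suc n) x y \<in> \<int>"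
  unfolding ip_def latA_def by (auto intro!: Ints_sum Ints_mult)

lemma latD_add: "x \<in> latD n \<Longrightarrow> y \<in> latD n \<Longrightarrow> (\<lambda>i. x i + y i) \<in> latD n"
  by (auto simp: latD_def intro: even_sum_add)

lemma latD_uminus: "x \<in> latD n \<Longrightarrow> (\<lambda>i. - x i) \<in> latD n"
  by (auto simp: latD_def intro: even_sum_uminus)

lemma latD_ip_Ints: "x \<in> latD n \<Longrightarrow> y \<in> latD n \<Longrightarrow> ip n x y \<in> \<int>"
  unfolding ip_def latD_def by (auto intro!: Ints_sum Ints_mult)

definition latE8_half :: "vec set" where
  "latE8_half = {x. (\<forall>i\<ge>8. x i = 0) \<and> (\<forall>i<8. x i - 1/2 \<in> \<int>)
                   \<and> (\<exists>z::int. (\<Sum>i<8. x i) = 2 * of_int z)}"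

lemma latE8_eq: "latE8 = latD 8 \<union> latE8_half"
  by (simp add: latE8_def latE8_half_def)

lemma latE8_half_add_latD: "x \<in> latD 8 \<Longrightarrow> y \<in> latE8_half \<Longrightarrow> (\<lambda>i. x i + y i) \<in> latE8_half"
  by (auto simp: latD_def latE8_half_def intro: even_sum_add half_Ints_add)

lemma latE8_half_add: "x \<in> latE8_half \<Longrightarrow> y \<in> latE8_half \<Longrightarrow> (\<lambda>i. x i + y i) \<in> latD 8"
  by (auto simp: latD_def latE8_half_def intro: even_sum_add half_Ints_add_half)

lemma latE8_half_uminus: "x \<in> latE8_half \<Longrightarrow> (\<lambda>i. - x i) \<in> latE8_half"
  by (auto simp: latE8_half_def intro: even_sum_uminus half_Ints_uminus)

lemma latE8_add: "x \<in> latE8 \<Longrightarrow> y \<in> latE8 \<Longrightarrow> (\<lambda>i. x i + y i) \<in> latE8"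
  unfolding latE8_eq
  using latD_add latE8_half_add latE8_half_add_latD latE8_half_add_latD[of y x]
  by (auto simp: add.commute)

lemma latE8_uminus: "x \<in> latE8 \<Longrightarrow> (\<lambda>i. - x i) \<in> latE8"
  unfolding latE8_eq using latD_uminus latE8_half_uminus by auto

lemma ip_8_eq_shift: "ip 8 x y = (\<Sum>i<8. x i * (y i - 1/2)) + (\<Sum>i<8. x i) / 2"
  by (simp add: ip_def right_diff_distrib sum_subtractf sum_divide_distrib)

lemma latE8_half_ip_latD_Ints: "x \<in> latD 8 \<Longrightarrow> y \<in> latE8_half \<Longrightarrow> ip 8 x y \<in> \<int>"
proof -
  assume x: "x \<in> latD 8" and y: "y \<in> latE8_half"
  then obtain z :: int where z: "(\<Sum>i<8. x i) = 2 * of_int z" by (auto simp: latD_def)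
  have "(\<Sum>i<8. x i * (y i - 1/2)) \<in> \<int>"
    using x y by (auto simp: latD_def latE8_half_def intro!: Ints_sum Ints_mult)
  then show ?thesis by (simp add: ip_8_eq_shift z)
qed

lemma latE8_half_ip_Ints: "x \<in> latE8_half \<Longrightarrow> y \<in> latE8_half \<Longrightarrow> ip 8 x y \<in> \<int>"
proof -
  assume x: "x \<in> latE8_half" and y: "y \<in> latE8_half"
  obtain z :: int where z: "(\<Sum>i<8. x i) = 2 * of_int z" using x by (auto simp: latE8_half_def)
  obtain w :: int where w: "(\<Sum>i<8. y i) = 2 * of_int w" using y by (auto simp: latE8_half_def)
  have "(\<Sum>i<8. x i * (y i - 1/2))
      = (\<Sum>i<8. (y i - 1/2) * (x i - 1/2)) + (\<Sum>i<8. (y i - 1/2)) / 2"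
    unfolding sum_divide_distrib sum.distrib[symmetric] by (rule sum.cong) (auto simp: field_simps)
  also have "(\<Sum>i<8. (y i - 1/2)) = 2 * of_int w - 4" by (simp add: sum_subtractf w)
  finally have e: "(\<Sum>i<8. x i * (y i - 1/2)) = (\<Sum>i<8. (y i - 1/2) * (x i - 1/2)) + of_int (w - 2)"
    by simp
  have "(\<Sum>i<8. (y i - 1/2) * (x i - 1/2)) \<in> \<int>"
    using x y by (auto simp: latE8_half_def intro!: Ints_sum Ints_mult)
  then show ?thesis by (simp add: ip_8_eq_shift z e)
qed

lemma latE8_ip_Ints: "x \<in> latE8 \<Longrightarrow> y \<in> latE8 \<Longrightarrow> ip 8 x y \<in> \<int>"
  unfolding latE8_eq
  using latD_ip_Ints latE8_half_ip_latD_Ints latE8_half_ip_Ints latE8_half_ip_latD_Ints[of y x]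
    ip_commute[of 8 y x]
  by auto

lemma lat_add: "r \<in> lat T \<Longrightarrow> r' \<in> lat T \<Longrightarrow> (\<lambda>i. r i + r' i) \<in> lat T"
  by (cases T) (auto simp: latA_add latD_add latE8_add latE7_def latE6_def)

lemma lat_uminus: "r \<in> lat T \<Longrightarrow> (\<lambda>i. - r i) \<in> lat T"
  by (cases T) (auto simp: latA_uminus latD_uminus latE8_uminus latE7_def latE6_def)

lemma lat_ip_Ints: "r \<in> lat T \<Longrightarrow> r' \<in> lat T \<Longrightarrow> ip (amb T) r r' \<in> \<int>"
  by (cases T) (auto simp: latA_ip_Ints latD_ip_Ints latE8_ip_Ints latE7_def latE6_def)

fun pair_vec :: "(nat \<times> nat) \<times> (real \<times> real) \<Rightarrow> vec" where
  "pair_vec ((i, j), (s, t)) = (\<lambda>l. (if l = i then s else 0) + (if l = j then t else 0))"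

declare pair_vec.simps [simp del]

definition pairs :: "nat \<Rightarrow> (nat \<times> nat) set" where
  "pairs n = {(i, j). i < j \<and> j < n}"

definition D_params :: "nat \<Rightarrow> ((nat \<times> nat) \<times> (real \<times> real)) set" where
  "D_params n = pairs n \<times> ({-1, 1} \<times> {-1, 1})"

definition A_params :: "nat \<Rightarrow> ((nat \<times> nat) \<times> (real \<times> real)) set" where
  "A_params n = pairs n \<times> {(1, -1), (-1, 1)}"

lemma finite_pairs: "finite (pairs n)"
  by (rule finite_subset[of _ "{..<n} \<times> {..<n}"]) (auto simp: pairs_def)

lemma finite_D_params: "finite (D_params n)"
  by (simp add: D_params_def finite_pairs)

lemma finite_A_params: "finite (A_params n)"
  by (simp add: A_params_def finite_pairs)

lemma ip_pair_vec:
  assumes "i < m" "j < m" "i \<noteq> j"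
  shows "ip m (pair_vec ((i, j), (s, t))) y = s * y i + t * y j"
proof -
  have "ip m (pair_vec ((i, j), (s, t))) y
      = (\<Sum>l<m. (if l = i then s * y i else 0) + (if l = j then t * y j else 0))"
    unfolding ip_def using assms by (intro sum.cong) (auto simp: pair_vec.simps)
  then show ?thesis using assms by (simp add: sum.distrib)
qed

lemma sum_pair_vec: "i < m \<Longrightarrow> j < m \<Longrightarrow> i \<noteq> j \<Longrightarrow> (\<Sum>l<m. pair_vec ((i, j), (s, t)) l) = s + t"
  by (simp add: pair_vec.simps sum.distrib)

lemma pair_vec_inject:
  assumes "i < j" "s \<noteq> 0" "t \<noteq> 0" "i' < j'" "s' \<noteq> 0" "t' \<noteq> 0"
    and e: "pair_vec ((i, j), (s, t)) = pair_vec ((i', j'), (s', t'))"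
  shows "i = i' \<and> j = j' \<and> s = s' \<and> t = t'"
proof -
  have at: "(if l = i then s else 0) + (if l = j then t else 0)
              = (if l = i' then s' else 0) + (if l = j' then t' else 0)" for l
    using fun_cong[OF e, of l] by (simp only: pair_vec.simps)
  have "i = i' \<or> i = j'" using at[of i] \<open>i < j\<close> \<open>s \<noteq> 0\<close> by (auto split: if_split_asm)
  moreover have "i' = i \<or> i' = j" using at[of i'] \<open>i' < j'\<close> \<open>s' \<noteq> 0\<close> by (auto split: if_split_asm)
  ultimately have "i = i'" using \<open>i < j\<close> \<open>i' < j'\<close> by auto
  moreover have "j = i' \<or> j = j'" using at[of j] \<open>i < j\<close> \<open>t \<noteq> 0\<close> by (auto split: if_split_asm)
  ultimately have "j = j'" using \<open>i < j\<close> by auto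
  then show ?thesis using at[of i] at[of j] \<open>i < j\<close> \<open>i = i'\<close> by auto
qed

lemma inj_on_pair_vec: "inj_on pair_vec {((i, j), (s, t)). i < j \<and> s \<noteq> 0 \<and> t \<noteq> 0}"
  by (rule inj_onI) (auto dest: pair_vec_inject)

lemma inj_on_pair_vec_D_params: "inj_on pair_vec (D_params n)"
  by (rule inj_on_subset[OF inj_on_pair_vec]) (auto simp: D_params_def pairs_def)

lemma inj_on_pair_vec_A_params: "inj_on pair_vec (A_params n)"
  by (rule inj_on_subset[OF inj_on_pair_vec]) (auto simp: A_params_def pairs_def)

lemma norm2_Ints_vec:
  assumes supp: "\<forall>i\<ge>m. x i = 0" and Ints: "\<forall>i<m. x i \<in> \<int>" and norm: "ip m x x = 2"
  shows "\<exists>i j s t. i < j \<and> j < m \<and> s \<in> {-1, 1} \<and> t \<in> {-1, 1} \<and> x = pair_vec ((i, j), (s, t))"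
proof -
  define Z where "Z = {i\<in>{..<m}. x i \<noteq> 0}"
  have unit: "x i = 1 \<or> x i = -1" if i: "i \<in> Z" for i
  proof -
    have "x i * x i \<le> (\<Sum>l<m. x l * x l)" by (rule member_le_sum) (use i in \<open>auto simp: Z_def\<close>)
    then have le2: "\<bar>x i\<bar> * \<bar>x i\<bar> \<le> 2" using norm by (simp add: ip_def)
    have "\<not> 2 \<le> \<bar>x i\<bar>"
    proof
      assume "2 \<le> \<bar>x i\<bar>"
      then have "2 * 2 \<le> \<bar>x i\<bar> * \<bar>x i\<bar>" by (intro mult_mono) auto
      then show False using le2 by simp
    qed
    then show ?thesis using Ints_small_cases[of "x i"] Ints i by (auto simp: Z_def)
  qed
  have "ip m x x = (\<Sum>i\<in>Z. x i * x i)"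
    unfolding ip_def by (rule sum.mono_neutral_right) (auto simp: Z_def)
  also have "\<dots> = (\<Sum>i\<in>Z. 1)" by (rule sum.cong) (use unit in fastforce)+
  finally have "card Z = 2" using norm by simp
  then obtain a b where "a \<noteq> b" "Z = {a, b}" by (auto simp: card_2_iff)
  then obtain i j where ij: "i < j" "Z = {i, j}"
    by (metis insert_commute linorder_neqE_nat)
  have "x = pair_vec ((i, j), (x i, x j))"
  proof
    fix l
    show "x l = pair_vec ((i, j), (x i, x j)) l"
      using ij supp by (cases "l < m") (auto simp: Z_def pair_vec.simps)
  qed
  moreover have "j < m" using ij by (auto simp: Z_def)
  ultimately show ?thesis using ij unit by blast
qed

lemma pairs_Suc: "pairs (Suc n) = pairs n \<union> (\<lambda>i. (i, n)) ` {..<n}"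
  by (auto simp: pairs_def)

lemma sum_pairs_add: "(\<Sum>(i, j)\<in>pairs n. f i + f j) = (real n - 1) * (\<Sum>i<n. f i :: real)"
proof (induction n)
  case (Suc n)
  have "(\<Sum>(i, j)\<in>pairs (Suc n). f i + f j) = (\<Sum>(i, j)\<in>pairs n. f i + f j) + (\<Sum>i<n. f i + f n)"
    unfolding pairs_Suc
    using finite_pairs[of n]
    by (subst sum.union_disjoint) (auto simp: pairs_def sum.reindex inj_on_def)
  also have "\<dots> = (real (Suc n) - 1) * (\<Sum>i<Suc n. f i)"
    using Suc by (simp add: sum.distrib algebra_simps)
  finally show ?case .
qed (simp add: pairs_def)

lemma sum_pairs_diff_sq:
  "(\<Sum>(i, j)\<in>pairs n. (f i - f j)^2) = real n * (\<Sum>i<n. (f i)^2) - (\<Sum>i<n. f i :: real)^2"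
proof (induction n)
  case (Suc n)
  have "(\<Sum>(i, j)\<in>pairs (Suc n). (f i - f j)^2)
      = (\<Sum>(i, j)\<in>pairs n. (f i - f j)^2) + (\<Sum>i<n. (f i - f n)^2)"
    unfolding pairs_Suc
    using finite_pairs[of n]
    by (subst sum.union_disjoint) (auto simp: pairs_def sum.reindex inj_on_def)
  also have "(\<Sum>i<n. (f i - f n)^2) = (\<Sum>i<n. (f i)^2) - 2 * f n * (\<Sum>i<n. f i) + real n * (f n)^2"
    by (simp add: power2_diff sum.distrib sum_subtractf sum_distrib_left algebra_simps)
  finally show ?case
    using Suc by (simp add: power2_eq_square algebra_simps)
qed (simp add: pairs_def)

lemma sum_D_params_ip_sq:
  assumes "n \<le> m"
  shows "(\<Sum>p\<in>D_params n. (ip m (pair_vec p) y)^2) = 4 * (real n - 1) * (\<Sum>i<n. (y i)^2)"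
proof -
  have "(\<Sum>p\<in>D_params n. (ip m (pair_vec p) y)^2)
      = (\<Sum>ij\<in>pairs n. \<Sum>st\<in>{-1, 1::real} \<times> {-1, 1}. (ip m (pair_vec (ij, st)) y)^2)"
    unfolding D_params_def sum.cartesian_product by (intro sum.cong) auto
  also have "\<dots> = (\<Sum>(i, j)\<in>pairs n. 4 * ((y i)^2 + (y j)^2))"
  proof (rule sum.cong)
    fix ij assume ij: "ij \<in> pairs n"
    obtain i j where [simp]: "ij = (i, j)" by fastforce
    have "i < m" "j < m" "i \<noteq> j" using ij assms by (auto simp: pairs_def)
    moreover have "{-1, 1::real} \<times> {-1, 1} = {(-1, -1), (-1, 1), (1, -1), (1, 1)}" by auto
    ultimately show "(\<Sum>st\<in>{-1, 1::real} \<times> {-1, 1}. (ip m (pair_vec (ij, st)) y)^2)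
        = (case ij of (i, j) \<Rightarrow> 4 * ((y i)^2 + (y j)^2))"
      by (simp add: ip_pair_vec power2_eq_square algebra_simps)
  qed simp
  also have "\<dots> = 4 * (\<Sum>(i, j)\<in>pairs n. (y i)^2 + (y j)^2)"
    by (simp add: sum_distrib_left case_prod_beta)
  also have "\<dots> = 4 * (real n - 1) * (\<Sum>i<n. (y i)^2)"
    by (simp add: sum_pairs_add)
  finally show ?thesis .
qed

lemma sum_A_params_ip_sq:
  "(\<Sum>p\<in>A_params n. (ip n (pair_vec p) y)^2) = 2 * (real n * (\<Sum>i<n. (y i)^2) - (\<Sum>i<n. y i)^2)"
proof -
  have "(\<Sum>p\<in>A_params n. (ip n (pair_vec p) y)^2)
      = (\<Sum>ij\<in>pairs n. \<Sum>st\<in>{(1::real, -1::real), (-1, 1)}. (ip n (pair_vec (ij, st)) y)^2)"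
    unfolding A_params_def sum.cartesian_product by (intro sum.cong) auto
  also have "\<dots> = (\<Sum>(i, j)\<in>pairs n. 2 * (y i - y j)^2)"
  proof (rule sum.cong)
    fix ij assume ij: "ij \<in> pairs n"
    obtain i j where [simp]: "ij = (i, j)" by fastforce
    have "i < n" "j < n" "i \<noteq> j" using ij by (auto simp: pairs_def)
    then show "(\<Sum>st\<in>{(1::real, -1::real), (-1, 1)}. (ip n (pair_vec (ij, st)) y)^2)
        = (case ij of (i, j) \<Rightarrow> 2 * (y i - y j)^2)"
      by (simp add: ip_pair_vec power2_eq_square algebra_simps)
  qed simp
  also have "\<dots> = 2 * (\<Sum>(i, j)\<in>pairs n. (y i - y j)^2)"
    by (simp add: sum_distrib_left case_prod_beta)
  also have "\<dots> = 2 * (real n * (\<Sum>i<n. (y i)^2) - (\<Sum>i<n. y i)^2)"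
    by (simp add: sum_pairs_diff_sq)
  finally show ?thesis .
qed

lemma ip_pair_vec_self:
  "i < m \<Longrightarrow> j < m \<Longrightarrow> i \<noteq> j \<Longrightarrow> ip m (pair_vec ((i, j), (s, t))) (pair_vec ((i, j), (s, t))) = s * s + t * t"
  by (simp add: ip_pair_vec) (simp add: pair_vec.simps)

lemma roots_latD: "roots n (latD n) = pair_vec ` D_params n"
proof
  show "roots n (latD n) \<subseteq> pair_vec ` D_params n"
  proof
    fix x assume "x \<in> roots n (latD n)"
    then have "\<forall>i\<ge>n. x i = 0" "\<forall>i<n. x i \<in> \<int>" "ip n x x = 2" by (auto simp: roots_def latD_def)
    then obtain i j s t where "i < j" "j < n" "s \<in> {-1, 1}" "t \<in> {-1, 1}" "x = pair_vec ((i, j), (s, t))"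
      using norm2_Ints_vec by blast
    then show "x \<in> pair_vec ` D_params n"
      by (intro image_eqI[of _ _ "((i, j), (s, t))"]) (auto simp: D_params_def pairs_def)
  qed
  show "pair_vec ` D_params n \<subseteq> roots n (latD n)"
  proof clarify
    fix i j s t assume "((i, j), (s, t)) \<in> D_params n"
    then have h: "i < j" "j < n" "s \<in> {-1, 1}" "t \<in> {-1, 1}" by (auto simp: D_params_def pairs_def)
    then have "s + t = 2 * of_int (-1::int) \<or> s + t = 2 * of_int (0::int) \<or> s + t = 2 * of_int (1::int)"
      by auto
    then have "\<exists>z::int. (\<Sum>l<n. pair_vec ((i, j), (s, t)) l) = 2 * of_int z"
      using h sum_pair_vec[of i n j s t] by (metis less_not_refl order.strict_trans)
    then show "pair_vec ((i, j), (s, t)) \<in> roots n (latD n)"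
      using h ip_pair_vec_self[of i n j s t] by (auto simp: roots_def latD_def pair_vec.simps)
  qed
qed

lemma roots_latA: "roots (Suc n) (latA n) = pair_vec ` A_params (Suc n)"
proof
  show "roots (Suc n) (latA n) \<subseteq> pair_vec ` A_params (Suc n)"
  proof
    fix x assume x: "x \<in> roots (Suc n) (latA n)"
    then have "\<forall>i\<ge>Suc n. x i = 0" "\<forall>i<Suc n. x i \<in> \<int>" "ip (Suc n) x x = 2"
      by (auto simp: roots_def latA_def)
    then obtain i j s t where h: "i < j" "j < Suc n" "s \<in> {-1, 1}" "t \<in> {-1, 1}"
        "x = pair_vec ((i, j), (s, t))"
      using norm2_Ints_vec by blast
    have "(\<Sum>l<Suc n. x l) = 0" using x by (simp add: roots_def latA_def lessThan_Suc_atMost)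
    then have "s + t = 0" using h sum_pair_vec[of i "Suc n" j s t] by simp
    then show "x \<in> pair_vec ` A_params (Suc n)"
      using h by (intro image_eqI[of _ _ "((i, j), (s, t))"]) (auto simp: A_params_def pairs_def)
  qed
  show "pair_vec ` A_params (Suc n) \<subseteq> roots (Suc n) (latA n)"
  proof clarify
    fix i j s t assume "((i, j), (s, t)) \<in> A_params (Suc n)"
    then have h: "i < j" "j < Suc n" "(s, t) \<in> {(1, -1), (-1, 1)}" by (auto simp: A_params_def pairs_def)
    then have "(\<Sum>l\<le>n. pair_vec ((i, j), (s, t)) l) = 0"
      using sum_pair_vec[of i "Suc n" j s t] by (auto simp: lessThan_Suc_atMost)
    then show "pair_vec ((i, j), (s, t)) \<in> roots (Suc n) (latA n)"
      using h ip_pair_vec_self[of i "Suc n" j s t] by (auto simp: roots_def latA_def pair_vec.simps)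
  qed
qed

definition even_signs :: "int list list" where
  "even_signs = filter (\<lambda>l. 4 dvd sum_list l) (List.n_lists 8 [1, -1])"

definition half_vec :: "int list \<Rightarrow> vec" where
  "half_vec l = (\<lambda>i. if i < 8 then of_int (l ! i) / 2 else 0)"

lemma mem_even_signs:
  "l \<in> set even_signs \<longleftrightarrow> length l = 8 \<and> set l \<subseteq> {1, -1} \<and> 4 dvd sum_list l"
  by (auto simp: even_signs_def set_n_lists)

lemma even_signs_nth:
  assumes "l \<in> set even_signs" and "i < 8"
  shows "l ! i = 1 \<or> l ! i = -1"
proof -
  have "length l = 8" "set l \<subseteq> {1, -1}" using assms(1) by (auto simp: mem_even_signs)
  moreover have "l ! i \<in> set l" using assms(2) calculation(1) by simp
  ultimately show ?thesis by blast
qed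

lemma inj_on_half_vec: "inj_on half_vec (set even_signs)"
proof (rule inj_onI)
  fix l l' assume "l \<in> set even_signs" "l' \<in> set even_signs" and e: "half_vec l = half_vec l'"
  then have "length l = 8" "length l' = 8" by (auto simp: mem_even_signs)
  moreover have "l ! i = l' ! i" if "i < 8" for i
    using fun_cong[OF e, of i] that by (simp add: half_vec_def)
  ultimately show "l = l'" by (simp add: nth_equalityI)
qed

lemma distinct_even_signs: "distinct even_signs"
  unfolding even_signs_def by (intro distinct_filter distinct_n_lists) simp

lemma sum_list_8: "length l = 8 \<Longrightarrow> sum_list l = (\<Sum>i<8. l ! i)"
  by (simp add: sum_list_sum_nth atLeast0LessThan)

lemma norm2_latE8_half:
  assumes half: "\<forall>i<8. x i - 1/2 \<in> \<int>" and norm: "ip 8 x x = 2" and "i < 8"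
  shows "x i = 1/2 \<or> x i = -1/2"
proof -
  have quarter: "1/4 \<le> x l * x l" if "l < 8" for l
  proof -
    have "x l = 1/2 \<or> x l = -1/2 \<or> 3/2 \<le> \<bar>x l\<bar>" using half that half_Ints_small_cases by blast
    moreover have "3/2 \<le> \<bar>x l\<bar> \<Longrightarrow> 3/2 * (3/2) \<le> \<bar>x l\<bar> * \<bar>x l\<bar>" by (intro mult_mono) auto
    ultimately show ?thesis using half_sq[of "x l"] by fastforce
  qed
  have "(\<Sum>l<8. x l * x l) = x i * x i + (\<Sum>l\<in>{..<8} - {i}. x l * x l)"
    using \<open>i < 8\<close> by (simp add: sum.remove)
  moreover have "(\<Sum>l\<in>{..<8} - {i}. x l * x l) \<ge> (\<Sum>l\<in>{..<8::nat} - {i}. 1/4)"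
    by (rule sum_mono) (use quarter in auto)
  moreover have "card ({..<8::nat} - {i}) = 7" using \<open>i < 8\<close> by simp
  ultimately have "\<bar>x i\<bar> * \<bar>x i\<bar> < 3/2 * (3/2)" using norm by (simp add: ip_def)
  then have "\<not> 3/2 \<le> \<bar>x i\<bar>" using mult_mono[of "3/2" "\<bar>x i\<bar>" "3/2" "\<bar>x i\<bar>"] by auto
  then show ?thesis using half \<open>i < 8\<close> half_Ints_small_cases by blast
qed

lemma roots_latE8_half: "{x \<in> latE8_half. ip 8 x x = 2} = half_vec ` set even_signs"
proof
  show "{x \<in> latE8_half. ip 8 x x = 2} \<subseteq> half_vec ` set even_signs"
  proof clarify
    fix x assume x: "x \<in> latE8_half" "ip 8 x x = 2"
    have pm: "x i = 1/2 \<or> x i = -1/2" if "i < 8" for i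
      using x that norm2_latE8_half by (auto simp: latE8_half_def)
    obtain z :: int where z: "(\<Sum>i<8. x i) = 2 * of_int z" using x by (auto simp: latE8_half_def)
    define l where "l = map (\<lambda>i. if x i = 1/2 then 1 else -1 :: int) [0..<8]"
    have len: "length l = 8" by (simp add: l_def)
    have l_nth: "of_int (l ! i) = 2 * x i" if "i < 8" for i
      using pm[OF that] that by (auto simp: l_def)
    have "of_int (sum_list l) = (\<Sum>i<8. 2 * x i)"
      using len l_nth by (simp add: sum_list_8)
    then have "sum_list l = 4 * z" using z by (simp add: sum_distrib_left[symmetric] flip: of_int_eq_iff)
    then have "l \<in> set even_signs" using len by (auto simp: mem_even_signs l_def)
    moreover have "half_vec l = x"
      using l_nth x(1) by (auto simp: half_vec_def latE8_half_def fun_eq_iff)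
    ultimately show "x \<in> half_vec ` set even_signs" by blast
  qed
  show "half_vec ` set even_signs \<subseteq> {x \<in> latE8_half. ip 8 x x = 2}"
  proof clarify
    fix l assume l: "l \<in> set even_signs"
    have len: "length l = 8" and "4 dvd sum_list l" using l by (auto simp: mem_even_signs)
    then obtain z where z: "sum_list l = 4 * z" by (auto elim: dvdE)
    have pm: "half_vec l i = 1/2 \<or> half_vec l i = -1/2" if "i < 8" for i
      using even_signs_nth[OF l that] that by (auto simp: half_vec_def)
    have "(\<Sum>i<8. half_vec l i) = of_int (sum_list l) / 2"
      using len by (simp add: half_vec_def sum_list_8 sum_divide_distrib)
    then have "(\<Sum>i<8. half_vec l i) = 2 * of_int z" using z by simp
    moreover have "half_vec l i - 1/2 \<in> \<int>" if "i < 8" for i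
    proof -
      have "half_vec l i - 1/2 = 0 \<or> half_vec l i - 1/2 = - 1" using pm[OF that] by auto
      then show ?thesis by (metis Ints_0 Ints_1 Ints_minus)
    qed
    moreover have "ip 8 (half_vec l) (half_vec l) = (\<Sum>i<(8::nat). 1/4)"
      unfolding ip_def by (rule sum.cong) (use pm half_sq in auto)
    ultimately show "half_vec l \<in> latE8_half \<and> ip 8 (half_vec l) (half_vec l) = 2"
      by (auto simp: latE8_half_def half_vec_def)
  qed
qed

definition E7_signs :: "int list list" where
  "E7_signs = filter (\<lambda>l. l ! 6 = l ! 7) even_signs"

definition E6_signs :: "int list list" where
  "E6_signs = filter (\<lambda>l. l ! 5 = l ! 6 \<and> l ! 6 = l ! 7) even_signs"

definition E7_D_params :: "((nat \<times> nat) \<times> (real \<times> real)) set" where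
  "E7_D_params = D_params 6 \<union> {((6, 7), (1, 1)), ((6, 7), (-1, -1))}"

lemma gram_even_signs:
  assumes "i < 8" "j < 8"
  shows "(\<Sum>l\<leftarrow>even_signs. l ! i * l ! j) = (if i = j then 128 else 0)"
proof -
  have "list_all (\<lambda>i. list_all (\<lambda>j.
      (\<Sum>l\<leftarrow>even_signs. l ! i * l ! j) = (if i = j then 128 else 0)) [0..<8]) [0..<8]"
    unfolding even_signs_def by code_simp
  then show ?thesis using assms by (simp add: list_all_iff)
qed

lemma gram_E7_signs:
  assumes "i < 8" "j < 8"
  shows "(\<Sum>l\<leftarrow>E7_signs. l ! i * l ! j) = (if i = j \<or> i \<in> {6, 7} \<and> j \<in> {6, 7} then 64 else 0)"
proof -
  have "list_all (\<lambda>i. list_all (\<lambda>j. (\<Sum>l\<leftarrow>E7_signs. l ! i * l ! j)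
      = (if i = j \<or> i \<in> {6, 7} \<and> j \<in> {6, 7} then 64 else 0)) [0..<8]) [0..<8]"
    unfolding E7_signs_def even_signs_def by code_simp
  then show ?thesis using assms by (simp add: list_all_iff)
qed

lemma gram_E6_signs:
  assumes "i < 8" "j < 8"
  shows "(\<Sum>l\<leftarrow>E6_signs. l ! i * l ! j) = (if i = j \<or> i \<in> {5, 6, 7} \<and> j \<in> {5, 6, 7} then 32 else 0)"
proof -
  have "list_all (\<lambda>i. list_all (\<lambda>j. (\<Sum>l\<leftarrow>E6_signs. l ! i * l ! j)
      = (if i = j \<or> i \<in> {5, 6, 7} \<and> j \<in> {5, 6, 7} then 32 else 0)) [0..<8]) [0..<8]"
    unfolding E6_signs_def even_signs_def by code_simp
  then show ?thesis using assms by (simp add: list_all_iff)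
qed

lemma sum_half_vec_ip_sq:
  assumes L: "set L \<subseteq> set even_signs" "distinct L"
  shows "(\<Sum>x\<in>half_vec ` set L. (ip 8 x y)^2)
    = (\<Sum>i<8. \<Sum>j<8. of_int (\<Sum>l\<leftarrow>L. l ! i * l ! j) * y i * y j) / 4"
proof -
  have "(\<Sum>x\<in>half_vec ` set L. (ip 8 x y)^2) = (\<Sum>l\<in>set L. (ip 8 (half_vec l) y)^2)"
    using inj_on_subset[OF inj_on_half_vec L(1)] by (simp add: sum.reindex)
  also have "\<dots> = (\<Sum>l\<in>set L. \<Sum>i<8. \<Sum>j<8. of_int (l ! i * l ! j) * y i * y j / 4)"
  proof (rule sum.cong)
    fix l
    have "ip 8 (half_vec l) y = (\<Sum>i<8. of_int (l ! i) * y i) / 2"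
      by (simp add: ip_def half_vec_def sum_divide_distrib)
    then show "(ip 8 (half_vec l) y)^2 = (\<Sum>i<8. \<Sum>j<8. of_int (l ! i * l ! j) * y i * y j / 4)"
      by (simp add: power2_eq_square sum_product sum_divide_distrib mult_ac)
  qed simp
  also have "\<dots> = (\<Sum>i<8. \<Sum>j<8. (\<Sum>l\<in>set L. of_int (l ! i * l ! j)) * y i * y j) / 4"
    by (simp add: sum_divide_distrib sum_distrib_right sum.swap[of _ "set L"])
  also have "\<dots> = (\<Sum>i<8. \<Sum>j<8. of_int (\<Sum>l\<leftarrow>L. l ! i * l ! j) * y i * y j) / 4"
    using L(2) by (simp add: sum_list_distinct_conv_sum_set)
  finally show ?thesis .
qed

lemma latD_Int_latE8_half: "latD 8 \<inter> latE8_half = {}"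
proof -
  have False if "x \<in> latD 8" "x \<in> latE8_half" for x
  proof -
    have "x 0 \<in> \<int>" using that(1) by (simp add: latD_def)
    moreover have "x 0 - 1/2 \<in> \<int>" using that(2) by (simp add: latE8_half_def)
    ultimately have "x 0 - (x 0 - 1/2) \<in> \<int>" by (rule Ints_diff)
    then show False by simp
  qed
  then show ?thesis by blast
qed

lemma roots_latE8: "roots 8 latE8 = pair_vec ` D_params 8 \<union> half_vec ` set even_signs"
proof -
  have "roots 8 latE8 = roots 8 (latD 8) \<union> {x \<in> latE8_half. ip 8 x x = 2}"
    by (auto simp: roots_def latE8_eq)
  then show ?thesis by (simp add: roots_latD roots_latE8_half)
qed

lemma sum_ip_sq_pair_vec_Un_half_vec:
  assumes P: "P \<subseteq> D_params 8" and L: "set L \<subseteq> set even_signs" "distinct L"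
  shows "(\<Sum>x\<in>pair_vec ` P \<union> half_vec ` set L. (ip 8 x y)^2)
    = (\<Sum>p\<in>P. (ip 8 (pair_vec p) y)^2) + (\<Sum>i<8. \<Sum>j<8. of_int (\<Sum>l\<leftarrow>L. l ! i * l ! j) * y i * y j) / 4"
proof -
  have "pair_vec ` P \<subseteq> latD 8" using P roots_latD[of 8] unfolding roots_def by blast
  moreover have "half_vec ` set L \<subseteq> latE8_half" using L(1) roots_latE8_half by blast
  ultimately have "pair_vec ` P \<inter> half_vec ` set L = {}" using latD_Int_latE8_half by blast
  moreover have "finite P" using finite_subset[OF P finite_D_params] .
  moreover have "inj_on pair_vec P" using inj_on_subset[OF inj_on_pair_vec_D_params P] .
  ultimately show ?thesis using sum_half_vec_ip_sq[OF L] by (simp add: sum.union_disjoint sum.reindex)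
qed

lemma D_params_mono: "m \<le> n \<Longrightarrow> D_params m \<subseteq> D_params n"
  by (auto simp: D_params_def pairs_def)

lemma E7_D_params_subset: "E7_D_params \<subseteq> D_params 8"
  using D_params_mono[of 6 8] by (auto simp: E7_D_params_def D_params_def pairs_def)

lemma pair_vec_E7_iff:
  assumes "p \<in> D_params 8"
  shows "pair_vec p 6 = pair_vec p 7 \<longleftrightarrow> p \<in> E7_D_params"
proof -
  obtain i j s t where p: "p = ((i, j), (s, t))" "i < j" "j < 8" "s \<in> {-1, 1}" "t \<in> {-1, 1}"
    using assms by (auto simp: D_params_def pairs_def)
  then have "j < 6 \<or> j = 6 \<or> j = 7" by auto
  then show ?thesis
    using p by (elim disjE) (auto simp: pair_vec.simps E7_D_params_def D_params_def pairs_def)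
qed

lemma pair_vec_E6_iff:
  assumes "p \<in> D_params 8"
  shows "pair_vec p 5 = pair_vec p 6 \<and> pair_vec p 6 = pair_vec p 7 \<longleftrightarrow> p \<in> D_params 5"
proof -
  obtain i j s t where p: "p = ((i, j), (s, t))" "i < j" "j < 8" "s \<in> {-1, 1}" "t \<in> {-1, 1}"
    using assms by (auto simp: D_params_def pairs_def)
  then have "j < 5 \<or> j = 5 \<or> j = 6 \<or> j = 7" by auto
  then show ?thesis
    using p by (elim disjE) (auto simp: pair_vec.simps D_params_def pairs_def)
qed

lemma roots_latE7: "roots 8 latE7 = pair_vec ` E7_D_params \<union> half_vec ` set E7_signs"
proof -
  have "roots 8 latE7 = {x \<in> roots 8 latE8. x 6 = x 7}"
    by (auto simp: roots_def latE7_def)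
  also have "\<dots> = {x \<in> pair_vec ` D_params 8. x 6 = x 7} \<union> {x \<in> half_vec ` set even_signs. x 6 = x 7}"
    unfolding roots_latE8 by auto
  also have "{x \<in> pair_vec ` D_params 8. x 6 = x 7} = pair_vec ` E7_D_params"
    using pair_vec_E7_iff E7_D_params_subset by blast
  also have "{x \<in> half_vec ` set even_signs. x 6 = x 7} = half_vec ` set E7_signs"
    by (auto simp: E7_signs_def half_vec_def)
  finally show ?thesis .
qed

lemma roots_latE6: "roots 8 latE6 = pair_vec ` D_params 5 \<union> half_vec ` set E6_signs"
proof -
  have "roots 8 latE6 = {x \<in> roots 8 latE8. x 5 = x 6 \<and> x 6 = x 7}"
    by (auto simp: roots_def latE6_def)
  also have "\<dots> = {x \<in> pair_vec ` D_params 8. x 5 = x 6 \<and> x 6 = x 7}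
      \<union> {x \<in> half_vec ` set even_signs. x 5 = x 6 \<and> x 6 = x 7}"
    unfolding roots_latE8 by auto
  also have "{x \<in> pair_vec ` D_params 8. x 5 = x 6 \<and> x 6 = x 7} = pair_vec ` D_params 5"
    using pair_vec_E6_iff D_params_mono[of 5 8, simplified] by blast
  also have "{x \<in> half_vec ` set even_signs. x 5 = x 6 \<and> x 6 = x 7} = half_vec ` set E6_signs"
    by (auto simp: E6_signs_def half_vec_def)
  finally show ?thesis .
qed

lemma sum_lessThan_8: "(\<Sum>i<(8::nat). f i) = f 0 + f 1 + f 2 + f 3 + f 4 + f 5 + f 6 + (f 7 :: real)"
  by (simp add: eval_nat_numeral)

lemma sum_roots_latE8_ip_sq: "(\<Sum>a\<in>roots 8 latE8. (ip 8 a y)^2) = 60 * ip 8 y y"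
proof -
  have "(\<Sum>i<8. \<Sum>j<8. of_int (\<Sum>l\<leftarrow>even_signs. l ! i * l ! j) * y i * y j)
      = (\<Sum>i<8. \<Sum>j<8. of_int (if i = j then 128 else 0) * y i * y j)"
    by (intro sum.cong refl) (simp add: gram_even_signs)
  then show ?thesis
    unfolding roots_latE8 using sum_ip_sq_pair_vec_Un_half_vec[of "D_params 8" even_signs y]
      sum_D_params_ip_sq[of 8 8 y] distinct_even_signs
    by (simp add: sum_lessThan_8 ip_def power2_eq_square algebra_simps)
qed

lemma sum_E7_D_params_ip_sq:
  "(\<Sum>p\<in>E7_D_params. (ip 8 (pair_vec p) y)^2) = 20 * (\<Sum>i<6. (y i)^2) + 2 * (y 6 + y 7)^2"
proof -
  have "D_params 6 \<inter> {((6, 7), (1, 1)), ((6, 7), (-1, -1))} = {}"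
    by (auto simp: D_params_def pairs_def)
  then have "(\<Sum>p\<in>E7_D_params. (ip 8 (pair_vec p) y)^2)
      = (\<Sum>p\<in>D_params 6. (ip 8 (pair_vec p) y)^2)
        + (\<Sum>p\<in>{((6, 7), (1::real, 1::real)), ((6, 7), (-1, -1))}. (ip 8 (pair_vec p) y)^2)"
    unfolding E7_D_params_def using finite_D_params by (simp add: sum.union_disjoint)
  then show ?thesis
    using sum_D_params_ip_sq[of 6 8 y] by (simp add: ip_pair_vec power2_eq_square algebra_simps)
qed

lemma sum_roots_latE7_ip_sq:
  assumes "y 6 = y 7"
  shows "(\<Sum>a\<in>roots 8 latE7. (ip 8 a y)^2) = 36 * ip 8 y y"
proof -
  have "(\<Sum>i<8. \<Sum>j<8. of_int (\<Sum>l\<leftarrow>E7_signs. l ! i * l ! j) * y i * y j)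
      = (\<Sum>i<8. \<Sum>j<8. of_int (if i = j \<or> i \<in> {6, 7} \<and> j \<in> {6, 7} then 64 else 0) * y i * y j)"
    by (intro sum.cong refl) (simp add: gram_E7_signs)
  moreover have "set E7_signs \<subseteq> set even_signs" "distinct E7_signs"
    using distinct_even_signs by (auto simp: E7_signs_def)
  ultimately show ?thesis
    unfolding roots_latE7 using assms sum_ip_sq_pair_vec_Un_half_vec[of E7_D_params E7_signs y]
      E7_D_params_subset sum_E7_D_params_ip_sq[of y]
    by (simp add: sum_lessThan_8 ip_def power2_eq_square algebra_simps eval_nat_numeral)
qed

lemma sum_roots_latE6_ip_sq:
  assumes "y 5 = y 6" "y 6 = y 7"
  shows "(\<Sum>a\<in>roots 8 latE6. (ip 8 a y)^2) = 24 * ip 8 y y"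
proof -
  have "(\<Sum>i<8. \<Sum>j<8. of_int (\<Sum>l\<leftarrow>E6_signs. l ! i * l ! j) * y i * y j)
      = (\<Sum>i<8. \<Sum>j<8. of_int (if i = j \<or> i \<in> {5, 6, 7} \<and> j \<in> {5, 6, 7} then 32 else 0) * y i * y j)"
    by (intro sum.cong refl) (simp add: gram_E6_signs)
  moreover have "set E6_signs \<subseteq> set even_signs" "distinct E6_signs"
    using distinct_even_signs by (auto simp: E6_signs_def)
  ultimately show ?thesis
    unfolding roots_latE6 using assms sum_ip_sq_pair_vec_Un_half_vec[of "D_params 5" E6_signs y]
      D_params_mono[of 5 8] sum_D_params_ip_sq[of 5 8 y]
    by (simp add: sum_lessThan_8 ip_def power2_eq_square algebra_simps eval_nat_numeral)
qed

section \<open>The Coxeter number identity\<close>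

lemma in_span_linear_eq_0:
  assumes "\<forall>r\<in>R. (\<Sum>i\<in>I. w i * r i) = 0" and "in_span R x"
  shows "(\<Sum>i\<in>I. w i * x i) = 0"
proof -
  obtain S c where S: "finite S" "S \<subseteq> R" "x = (\<lambda>i. \<Sum>r\<in>S. c r * r i)"
    using assms(2) by (auto simp: in_span_def)
  have "(\<Sum>i\<in>I. w i * x i) = (\<Sum>r\<in>S. c r * (\<Sum>i\<in>I. w i * r i))"
    unfolding S(3) by (simp add: sum_distrib_left mult_ac sum.swap[of _ I])
  also have "\<dots> = 0" using assms(1) S(2) by (auto intro!: sum.neutral)
  finally show ?thesis .
qed

lemma in_span_coset:
  assumes "g \<in> dual m R" and "c \<in> coset g R"
  shows "in_span R c"
proof -
  obtain S a where S: "finite S" "S \<subseteq> R" "g = (\<lambda>i. \<Sum>s\<in>S. a s * s i)"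
    using assms(1) by (auto simp: dual_def in_span_def)
  obtain r where r: "r \<in> R" "c = (\<lambda>i. g i + r i)" using assms(2) by (auto simp: coset_def)
  define b where "b s = (if s \<in> S then a s else 0) + (if s = r then 1 else 0)" for s
  have "(\<Sum>s\<in>insert r S. b s * s i) = (\<Sum>s\<in>S. a s * s i) + r i" for i
  proof -
    have "(\<Sum>s\<in>insert r S. (if s \<in> S then a s * s i else 0)) = (\<Sum>s\<in>S. a s * s i)"
      using S(1) by (intro sum.mono_neutral_cong_right) auto
    moreover have "(\<Sum>s\<in>insert r S. (if s = r then s i else 0)) = r i"
      using S(1) by simp
    moreover have "b s * s i = (if s \<in> S then a s * s i else 0) + (if s = r then s i else 0)" for s
      by (simp add: b_def distrib_right)
    ultimately show ?thesis by (simp add: sum.distrib)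
  qed
  then have "c = (\<lambda>i. \<Sum>s\<in>insert r S. b s * s i)" by (simp add: r(2) S(3))
  then show ?thesis unfolding in_span_def using S r(1) by (intro exI[of _ "insert r S"] exI[of _ b]) auto
qed

lemma sum_roots_ip_sq:
  assumes "in_span (lat T) y"
  shows "(\<Sum>a\<in>roots (amb T) (lat T). (ip (amb T) a y)^2) = 2 * real (cox T) * ip (amb T) y y"
proof (cases T)
  case (TA n)
  have "(\<Sum>i\<in>{..<Suc n}. 1 * y i) = 0"
    using in_span_linear_eq_0[of "latA n" "\<lambda>_. 1" "{..<Suc n}" y] assms TA
    by (simp add: latA_def lessThan_Suc_atMost)
  have "(\<Sum>a\<in>roots (Suc n) (latA n). (ip (Suc n) a y)^2)
      = (\<Sum>p\<in>A_params (Suc n). (ip (Suc n) (pair_vec p) y)^2)"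
    by (simp add: roots_latA sum.reindex[OF inj_on_pair_vec_A_params])
  also have "\<dots> = 2 * (real (Suc n) * (\<Sum>i<Suc n. (y i)^2) - (\<Sum>i<Suc n. y i)^2)"
    by (rule sum_A_params_ip_sq)
  also have "\<dots> = 2 * real (Suc n) * ip (Suc n) y y"
    using \<open>(\<Sum>i\<in>{..<Suc n}. 1 * y i) = 0\<close> by (simp add: ip_def power2_eq_square)
  finally show ?thesis using TA by simp
next
  case (TD n)
  have "(\<Sum>a\<in>roots n (latD n). (ip n a y)^2) = 4 * (real n - 1) * (\<Sum>i<n. (y i)^2)"
    using sum_D_params_ip_sq[of n n y] by (simp add: roots_latD sum.reindex[OF inj_on_pair_vec_D_params])
  also have "\<dots> = 2 * real (2 * n - 2) * ip n y y"
    by (cases "n = 0") (simp_all add: ip_def power2_eq_square of_nat_diff)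
  finally show ?thesis using TD by simp
next
  case TE8
  then show ?thesis using sum_roots_latE8_ip_sq[of y] by simp
next
  case TE7
  have "(\<Sum>i\<in>{6::nat, 7}. (if i = 6 then 1 else -1) * y i) = 0"
    using in_span_linear_eq_0[of latE7 "\<lambda>i. if i = 6 then 1 else -1" "{6, 7}" y] assms TE7
    by (simp add: latE7_def)
  then show ?thesis using TE7 sum_roots_latE7_ip_sq[of y] by simp
next
  case TE6
  have "(\<Sum>i\<in>{5::nat, 6}. (if i = 5 then 1 else -1) * y i) = 0"
    using in_span_linear_eq_0[of latE6 "\<lambda>i. if i = 5 then 1 else -1" "{5, 6}" y] assms TE6
    by (simp add: latE6_def)
  moreover have "(\<Sum>i\<in>{6::nat, 7}. (if i = 6 then 1 else -1) * y i) = 0"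
    using in_span_linear_eq_0[of latE6 "\<lambda>i. if i = 6 then 1 else -1" "{6, 7}" y] assms TE6
    by (simp add: latE6_def)
  ultimately show ?thesis using TE6 sum_roots_latE6_ip_sq[of y] by simp
qed

lemma finite_roots: "finite (roots (amb T) (lat T))"
  by (cases T) (simp_all add: roots_latA[simplified] roots_latD roots_latE8 roots_latE7 roots_latE6
      finite_A_params finite_D_params E7_D_params_def)

text \<open>A regular \<open>t\<close> splits the roots into \<open>\<Phi>\<^sup>+\<close> and \<open>-\<Phi>\<^sup>+\<close>.\<close>
lemma sum_posroots_eq_half:
  assumes "\<forall>a\<in>roots (amb T) (lat T). ip (amb T) a t \<noteq> 0"
  shows "(\<Sum>a\<in>posroots T t. (ip (amb T) a y)^2) = (\<Sum>a\<in>roots (amb T) (lat T). (ip (amb T) a y)^2) / 2"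
proof -
  define m where "m = amb T"
  define Phi where "Phi = roots m (lat T)"
  define N where "N = {a \<in> Phi. ip m a t < 0}"
  have P: "posroots T t = {a \<in> Phi. 0 < ip m a t}" by (simp add: posroots_def Phi_def m_def)
  have neg: "(\<lambda>i. - a i) \<in> Phi" if "a \<in> Phi" for a
    using that lat_uminus by (auto simp: Phi_def roots_def ip_uminus_left ip_uminus_right)
  have "Phi = posroots T t \<union> N" "posroots T t \<inter> N = {}"
    using assms by (auto simp: P N_def Phi_def m_def)
  moreover have "finite Phi" using finite_roots by (simp add: Phi_def m_def)
  moreover have "N = (\<lambda>a i. - a i) ` posroots T t"
  proof
    show "N \<subseteq> (\<lambda>a i. - a i) ` posroots T t"
    proof
      fix a assume "a \<in> N"
      then have "(\<lambda>i. - a i) \<in> posroots T t" using neg by (auto simp: N_def P ip_uminus_left)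
      then show "a \<in> (\<lambda>a i. - a i) ` posroots T t" by (rule rev_image_eqI) simp
    qed
    show "(\<lambda>a i. - a i) ` posroots T t \<subseteq> N"
      using neg by (auto simp: N_def P ip_uminus_left)
  qed
  moreover have "inj_on (\<lambda>a i. - a i) (posroots T t)" by (auto simp: inj_on_def fun_eq_iff)
  ultimately have "(\<Sum>a\<in>Phi. (ip m a y)^2) = 2 * (\<Sum>a\<in>posroots T t. (ip m a y)^2)"
    by (simp add: sum.union_disjoint sum.reindex ip_uminus_left)
  then show ?thesis by (simp add: Phi_def m_def)
qed

lemma cox_pos: "adm T \<Longrightarrow> 0 < cox T"
  by (cases T) auto

theorem mainTheorem2:
  fixes T :: rtype and g t :: vec and k :: real
  assumes "adm T"
    and "g \<in> dual (amb T) (lat T)"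
    and "\<forall>a\<in>roots (amb T) (lat T). ip (amb T) a t \<noteq> 0"
    and "\<exists>a\<in>coset g (lat T). ip (amb T) a a = k"
    and "\<forall>a\<in>coset g (lat T). k \<le> ip (amb T) a a"
  shows "(\<forall>j::int. j \<ge> 2 \<longrightarrow> smode T t j (vvec T g k) = (\<lambda>mu M. 0)
                          \<and> wtmode T t j (vvec T g k) = (\<lambda>mu M. 0))
       \<and> smode T t 1 (vvec T g k) = (\<lambda>mu M. 0)
       \<and> wtmode T t 1 (vvec T g k) = (\<lambda>mu M. complex_of_real k * vvec T g k mu M)"
proof -
  interpret min_norm_coset "amb T" "lat T" g k
    using lat_add lat_uminus lat_ip_Ints assms(2,5) by unfold_locales (auto simp: dual_def)
  have v: "vvec T g k = minvec_sum"
    by (auto simp: vvec_def minvec_sum_def minvecs_def fun_eq_iff)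
  have posroots: "posroots T t \<subseteq> roots (amb T) (lat T)" by (auto simp: posroots_def)
  have s: "smode T t j minvec_sum = (\<lambda>mu M. 0)" if "1 \<le> j" for j
    using that posroots root_term_vanishes by (simp add: smode_def fun_eq_iff subset_iff)
  have o_ge2: "omode T t j minvec_sum = (\<lambda>mu M. 0)" if "2 \<le> j" for j
    using that by (simp add: omode_def fun_eq_iff hsq_vac_valued_ge2[OF vac_valued_minvec_sum])
  have "(\<Sum>a\<in>posroots T t. (ip (amb T) a c)^2) = real (cox T) * k" if "c \<in> minvecs" for c
  proof -
    have "c \<in> coset g (lat T)" "ip (amb T) c c = k" using that by (auto simp: minvecs_def)
    then show ?thesis
      using sum_posroots_eq_half[OF assms(3), of c] sum_roots_ip_sq[OF in_span_coset[OF assms(2)]]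
      by simp
  qed
  then have "(\<Sum>a\<in>posroots T t. hsq (amb T) a 1 minvec_sum mu M)
      = complex_of_real (2 * real (cox T) * k) * minvec_sum mu M" for mu M
    by (rule sum_hsq_1)
  then have o1: "omode T t 1 minvec_sum = (\<lambda>mu M. complex_of_real k * minvec_sum mu M)"
    using cox_pos[OF assms(1)] by (simp add: omode_def fun_eq_iff)
  show ?thesis unfolding v using s o_ge2 o1 by (simp add: wtmode_def fun_eq_iff)
qed

end
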